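(* Let $c\in\mathsf{ACirc}[n,m]$. Then $[\![c]\!]=\{(p,f(p)):p\in k(x)^n\}$ for some rational affine map $f:k(x)^n\to k(x)^m$ if and only if there exists an affine signal flow graph $g$ of sort $(n,m)$ such that $[\![g]\!]=[\![c]\!]$.
   Context: Fix a field $k$; $k(x)$ is the field of polynomial fractions. Circuits: terms built from generators with sorts $(n,m)$: copier $\Delta:(1,2)$, discard $!:(1,0)$, amplifier $\mathsf{s}_r:(1,1)$ ($r\in k$), register $\mathsf{x}:(1,1)$, adder $+:(2,1)$, zero $0:(0,1)$, one $\mathbf{1}:(0,1)$; mirror images $\Delta^{op}:(2,1)$, $!^{op}:(0,1)$, $\mathsf{s}_r^{op}$, $\mathsf{x}^{op}:(1,1)$, $+^{op}:(1,2)$, $0^{op}:(1,0)$, $\mathbf{1}^{op}:(1,0)$; $\mathrm{id}_0:(0,0),\mathrm{id}_1:(1,1),\mathrm{sw}:(2,2)$; closed under $;$ and $\oplus$; $\mathsf{ACirc}[n,m]$: circuits of sort $(n,m)$. Denotation: $[\![\Delta]\!]=\{(p,(p,p))\}$, $[\![!]\!]=\{(p,\bullet)\}$, $[\![+]\!]=\{((p,q),p+q)\}$, $[\![0]\!]=\{(\bullet,0)\}$, $[\![\mathbf 1]\!]=\{(\bullet,1)\}$, $[\![\mathsf s_r]\!]=\{(p,rp)\}$, $[\![\mathsf x]\!]=\{(p,px)\}$; mirrored generators denote converse relations; structural ones identity, swap, $\{(\bullet,\bullet)\}$; $;$ relational composition, $\oplus$ product. Feedback: for $c:(n+1,m+1)$,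 $\mathrm{Tr}(c):(n,m)$ connects the last right port of $c$ to its last left port through a register $\mathsf x$, bending the wire with the cup $!^{op};\Delta:(0,2)$ and the cap $\Delta^{op};!:(2,0)$. Affine signal flow graphs: smallest class containing $\Delta,!,\mathsf s_r,\mathsf x,+,0,\mathbf 1,\mathrm{id}_0,\mathrm{id}_1,\mathrm{sw}$ and closed under $;$, $\oplus$, $\mathrm{Tr}$. $\mathsf{Rat}\subseteq k(x)$: fractions $p/q$ with $q$ having nonzero constant term. An affine map $f(p)=Ap+b$ is rational if $A$ and $b$ have all entries in $\mathsf{Rat}$. *)

theory Defs
  imports "HOL-Computational_Algebra.Polynomial" "HOL-Computational_Algebra.Fraction_Field"
begin

type_synonym 'k kx = "'k poly fract"

definition const_kx :: "'k::field \<Rightarrow> 'k kx" where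
  "const_kx r = Fract [:r:] 1"

definition X_kx :: "'k::field kx" where
  "X_kx = Fract [:0, 1:] 1"

definition RatK :: "'k::field kx set" where
  "RatK = {Fract p q | p q. coeff q 0 \<noteq> 0}"

datatype 'k gen = GCopy | GDisc | GAmp 'k | GReg | GAdd | GZero | GOne

datatype 'k circ =
    Gen "'k gen"
  | GenOp "'k gen"
  | Id0 | Id1 | Sw
  | Seq "'k circ" "'k circ"
  | Tensor "'k circ" "'k circ"

fun gsort :: "'k gen \<Rightarrow> nat \<times> nat" where
  "gsort GCopy = (1, 2)"
| "gsort GDisc = (1, 0)"
| "gsort (GAmp r) = (1, 1)"
| "gsort GReg = (1, 1)"
| "gsort GAdd = (2, 1)"
| "gsort GZero = (0, 1)"
| "gsort GOne = (0, 1)"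

inductive has_sort :: "'k circ \<Rightarrow> nat \<Rightarrow> nat \<Rightarrow> bool" where
  "gsort g = (n, m) \<Longrightarrow> has_sort (Gen g) n m"
| "gsort g = (m, n) \<Longrightarrow> has_sort (GenOp g) n m"
| "has_sort Id0 0 0"
| "has_sort Id1 1 1"
| "has_sort Sw 2 2"
| "has_sort c n l \<Longrightarrow> has_sort d l m \<Longrightarrow> has_sort (Seq c d) n m"
| "has_sort c n1 m1 \<Longrightarrow> has_sort d n2 m2 \<Longrightarrow> has_sort (Tensor c d) (n1 + n2) (m1 + m2)"

fun gden :: "'k::field gen \<Rightarrow> ('k kx list \<times> 'k kx list) set" where
  "gden GCopy = {([p], [p, p]) | p. True}"
| "gden GDisc = {([p], []) | p. True}"
| "gden (GAmp r) = {([p], [const_kx r * p]) | p. True}"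
| "gden GReg = {([p], [p * X_kx]) | p. True}"
| "gden GAdd = {([p, q], [p + q]) | p q. True}"
| "gden GZero = {([], [0])}"
| "gden GOne = {([], [1])}"

fun den :: "'k::field circ \<Rightarrow> ('k kx list \<times> 'k kx list) set" where
  "den (Gen g) = gden g"
| "den (GenOp g) = (gden g)\<inverse>"
| "den Id0 = {([], [])}"
| "den Id1 = {([p], [p]) | p. True}"
| "den Sw = {([p, q], [q, p]) | p q. True}"
| "den (Seq c d) = den c O den d"
| "den (Tensor c d) = {(a1 @ a2, b1 @ b2) | a1 a2 b1 b2. (a1, b1) \<in> den c \<and> (a2, b2) \<in> den d}"

fun idc :: "nat \<Rightarrow> 'k circ" where
  "idc 0 = Id0"
| "idc (Suc n) = Tensor Id1 (idc n)"

definition cup :: "'k circ" where "cup = Seq (GenOp GDisc) (Gen GCopy)"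
definition cap :: "'k circ" where "cap = Seq (GenOp GCopy) (Gen GDisc)"

text \<open>Feedback: for c of sort (n+1, m+1), Tr n m c has sort (n, m); the last right port of c
  is connected through a register to its last left port, using cup and cap.\<close>
definition Tr :: "nat \<Rightarrow> nat \<Rightarrow> 'k circ \<Rightarrow> 'k circ" where
  "Tr n m c =
     Seq (Tensor (idc n) cup)
    (Seq (Tensor c Id1)
    (Seq (Tensor (idc m) (Tensor (Gen GReg) Id1))
         (Tensor (idc m) cap)))"

inductive sfg :: "'k circ \<Rightarrow> bool" where
  "sfg (Gen g)"
| "sfg Id0"
| "sfg Id1"
| "sfg Sw"
| "sfg c \<Longrightarrow> sfg d \<Longrightarrow> has_sort c n l \<Longrightarrow> has_sort d l m \<Longrightarrow> sfg (Seq c d)"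
| "sfg c \<Longrightarrow> sfg d \<Longrightarrow> sfg (Tensor c d)"
| "sfg c \<Longrightarrow> has_sort c (Suc n) (Suc m) \<Longrightarrow> sfg (Tr n m c)"

definition rational_affine :: "nat \<Rightarrow> nat \<Rightarrow> ('k::field kx list \<Rightarrow> 'k kx list) \<Rightarrow> bool" where
  "rational_affine n m f \<longleftrightarrow>
     (\<exists>A b. (\<forall>i<m. \<forall>j<n. A i j \<in> RatK) \<and> (\<forall>i<m. b i \<in> RatK) \<and>
        (\<forall>p. length p = n \<longrightarrow>
             f p = map (\<lambda>i. (\<Sum>j<n. A i j * p ! j) + b i) [0..<m]))"

end

(*
  A signal flow graph denotes the graph of a rational affine map: the generators do, such graphs
  are closed under composition and tensor, and feeding the last output u of a rational affine map
  back through a register gives a loop equation u = s + a X u with s rational affine and a in Rat,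
  whose unique solution u = s / (1 - a X) is again rational because 1 - a X has constant term 1.

  Conversely, a rational affine map is assembled from its component forms by copying the inputs,
  and an affine form from amplifiers and adders. Multiplication by a polynomial is built from
  amplifiers and registers by Horner's scheme, and multiplication by r = p / (1 + q X) by feedback
  on the loop u = p x - q X u.
*)
theory Submission
  imports Defs
begin

section \<open>Sorts, and denotations as graphs of functions\<close>

inductive_cases has_sort_GenE: "has_sort (Gen g) n m"
inductive_cases has_sort_GenOpE: "has_sort (GenOp g) n m"
inductive_cases has_sort_Id0E: "has_sort Id0 n m"
inductive_cases has_sort_Id1E: "has_sort Id1 n m"
inductive_cases has_sort_SwE: "has_sort Sw n m"
inductive_cases has_sort_SeqE: "has_sort (Seq c d) n m"
inductive_cases has_sort_TensorE: "has_sort (Tensor c d) n m"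

lemma has_sort_TensorI:
  "has_sort c n1 m1 \<Longrightarrow> has_sort d n2 m2 \<Longrightarrow> n = n1 + n2 \<Longrightarrow> m = m1 + m2 \<Longrightarrow> has_sort (Tensor c d) n m"
  using has_sort.intros(7) by blast

lemma has_sort_unique: "has_sort c n m \<Longrightarrow> has_sort c n' m' \<Longrightarrow> n' = n \<and> m' = m"
proof (induction arbitrary: n' m' rule: has_sort.induct)
  case (6 c n l d m)
  then show ?case by (metis has_sort_SeqE)
next
  case (7 c n1 m1 d n2 m2)
  then show ?case by (metis has_sort_TensorE)
qed (auto elim: has_sort_GenE has_sort_GenOpE has_sort_Id0E has_sort_Id1E has_sort_SwE)

lemma den_lengths: "has_sort c n m \<Longrightarrow> (a, b) \<in> den c \<Longrightarrow> length a = n \<and> length b = m"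
proof (induction arbitrary: a b rule: has_sort.induct)
  case (1 g n m)
  then show ?case by (cases g) auto
next
  case (2 g m n)
  then show ?case by (cases g) auto
next
  case (6 c n l d m)
  then show ?case by force
next
  case (7 c n1 m1 d n2 m2)
  then show ?case by fastforce
qed auto

definition fun_graph :: "nat \<Rightarrow> ('a list \<Rightarrow> 'b list) \<Rightarrow> ('a list \<times> 'b list) set" where
  "fun_graph n f = {(p, f p) | p. length p = n}"

lemma in_fun_graph [simp]: "(a, b) \<in> fun_graph n f \<longleftrightarrow> length a = n \<and> b = f a"
  by (auto simp: fun_graph_def)

lemma fun_graph_eqI: "(\<And>a b. (a, b) \<in> R \<longleftrightarrow> length a = n \<and> b = f a) \<Longrightarrow> R = fun_graph n f"
  by auto

lemma fun_graph_cong: "(\<And>p. length p = n \<Longrightarrow> f p = g p) \<Longrightarrow> fun_graph n f = fun_graph n g"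
  by (auto simp: fun_graph_def)

lemma fun_graph_length:
  "has_sort c n m \<Longrightarrow> den c = fun_graph n f \<Longrightarrow> length p = n \<Longrightarrow> length (f p) = m"
  by (metis den_lengths in_fun_graph)

lemma relcomp_fun_graph:
  "(\<And>p. length p = n \<Longrightarrow> length (f p) = l) \<Longrightarrow> fun_graph n f O fun_graph l g = fun_graph n (g \<circ> f)"
  by (auto simp: fun_graph_def)

lemma den_Tensor_fun_graph:
  assumes "den c = fun_graph n1 f" and "den d = fun_graph n2 g"
  shows "den (Tensor c d) = fun_graph (n1 + n2) (\<lambda>p. f (take n1 p) @ g (drop n1 p))"
proof (rule fun_graph_eqI, rule iffI)
  fix a b
  assume ab: "length a = n1 + n2 \<and> b = f (take n1 a) @ g (drop n1 a)"
  then have "(take n1 a, f (take n1 a)) \<in> den c" "(drop n1 a, g (drop n1 a)) \<in> den d"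
    by (simp_all add: assms)
  moreover have "a = take n1 a @ drop n1 a" by simp
  ultimately show "(a, b) \<in> den (Tensor c d)"
    using ab unfolding den.simps(7) by blast
qed (auto simp: assms)

fun gen_map :: "'k::field gen \<Rightarrow> 'k kx list \<Rightarrow> 'k kx list" where
  "gen_map GCopy = (\<lambda>p. [hd p, hd p])"
| "gen_map GDisc = (\<lambda>p. [])"
| "gen_map (GAmp r) = (\<lambda>p. [const_kx r * hd p])"
| "gen_map GReg = (\<lambda>p. [hd p * X_kx])"
| "gen_map GAdd = (\<lambda>p. [hd p + hd (tl p)])"
| "gen_map GZero = (\<lambda>p. [0])"
| "gen_map GOne = (\<lambda>p. [1])"

lemma den_Gen: "den (Gen g) = fun_graph (fst (gsort g)) (gen_map g)"
  by (cases g) (auto simp: fun_graph_def length_Suc_conv numeral_2_eq_2)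

lemma den_Id0: "den Id0 = fun_graph 0 (\<lambda>_. [])"
  by (auto simp: fun_graph_def)

lemma den_Id1: "den Id1 = fun_graph 1 (\<lambda>p. p)"
  by (auto simp: fun_graph_def length_Suc_conv)

lemma den_Sw: "den Sw = fun_graph 2 (\<lambda>p. [hd (tl p), hd p])"
  by (auto simp: fun_graph_def length_Suc_conv numeral_2_eq_2)

lemma den_idc: "den (idc n) = fun_graph n (\<lambda>p. p)"
proof (induction n)
  case (Suc n)
  then show ?case
    by (simp only: idc.simps den_Tensor_fun_graph[OF den_Id1]) (auto intro: fun_graph_cong)
qed (auto simp: fun_graph_def)

lemma has_sort_idc: "has_sort (idc n) n n"
  by (induction n) (auto intro: has_sort.intros has_sort_TensorI)

lemma sfg_idc: "sfg (idc n)"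
  by (induction n) (auto intro: sfg.intros)

section \<open>The ring Rat\<close>

lemma RatK_Fract: "coeff q 0 \<noteq> 0 \<Longrightarrow> Fract p q \<in> RatK"
  unfolding RatK_def by blast

lemma RatK_E:
  assumes "r \<in> RatK"
  obtains p q where "r = Fract p q" "coeff q 0 \<noteq> 0" "q \<noteq> 0"
  using assms unfolding RatK_def by force

lemma RatK_0: "0 \<in> RatK" and RatK_1: "1 \<in> RatK"
  by (simp_all add: Zero_fract_def One_fract_def RatK_Fract)

lemma RatK_const: "const_kx r \<in> RatK" and RatK_X: "X_kx \<in> RatK"
  by (simp_all add: const_kx_def X_kx_def RatK_Fract)

lemma RatK_add: "r \<in> RatK \<Longrightarrow> s \<in> RatK \<Longrightarrow> r + s \<in> RatK"
  and RatK_mult: "r \<in> RatK \<Longrightarrow> s \<in> RatK \<Longrightarrow> r * s \<in> RatK"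
  by (auto elim!: RatK_E simp: RatK_Fract coeff_mult_0)

lemma RatK_one_minus_X:
  assumes "r \<in> RatK"
  shows "1 - r * X_kx \<noteq> 0" and "inverse (1 - r * X_kx) \<in> RatK"
proof -
  obtain p q where r: "r = Fract p q" "coeff q 0 \<noteq> 0" "q \<noteq> 0" using assms by (rule RatK_E)
  define d where "d = q - p * [:0, 1:]"
  have d0: "coeff d 0 = coeff q 0" by (simp add: d_def)
  have eq: "1 - r * X_kx = Fract d q"
    using r by (auto simp: X_kx_def One_fract_def d_def)
  show "1 - r * X_kx \<noteq> 0" using d0 r(2,3) by (auto simp: eq Zero_fract_def eq_fract)
  show "inverse (1 - r * X_kx) \<in> RatK" using d0 r(2) by (simp add: eq RatK_Fract)
qed

lemma Fract_pCons: "Fract (pCons a p) 1 = const_kx a + Fract p 1 * X_kx"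
proof -
  have "pCons a p = [:a:] + p * [:0, 1:]" by simp
  then show ?thesis by (simp add: const_kx_def X_kx_def)
qed

lemma RatK_denominator_one_plus_X:
  assumes "r \<in> RatK"
  obtains p q where "1 + Fract q 1 * X_kx \<noteq> 0" and "r * (1 + Fract q 1 * X_kx) = Fract p 1"
proof -
  obtain p0 q0 where r: "r = Fract p0 q0" "coeff q0 0 \<noteq> 0" "q0 \<noteq> 0"
    using assms by (rule RatK_E)
  obtain c q where q0: "q0 = pCons c q" by (cases q0)
  define s where "s = inverse c"
  have "c \<noteq> 0" using r(2) q0 by simp
  then have "smult s q0 = pCons 1 (smult s q)"
    by (simp add: q0 s_def)
  then have "Fract (smult s q0) 1 = 1 + Fract (smult s q) 1 * X_kx"
    by (simp only: Fract_pCons) (simp add: const_kx_def One_fract_def pCons_one)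
  moreover have "Fract (smult s q0) 1 \<noteq> 0"
    using r(3) \<open>c \<noteq> 0\<close> by (simp add: s_def Zero_fract_def eq_fract)
  moreover have "r * Fract (smult s q0) 1 = Fract (smult s p0) 1"
    using r(3) by (simp add: r(1) mult_fract eq_fract)
  ultimately show thesis
    using that by metis
qed

section \<open>Rational affine maps\<close>

definition rat_affine_form :: "nat \<Rightarrow> ('k::field kx list \<Rightarrow> 'k kx) \<Rightarrow> bool" where
  "rat_affine_form n \<phi> \<longleftrightarrow> (\<exists>a b. (\<forall>j<n. a j \<in> RatK) \<and> b \<in> RatK \<and>
      (\<forall>p. length p = n \<longrightarrow> \<phi> p = (\<Sum>j<n. a j * p ! j) + b))"

lemma rat_affine_formI:
  "(\<And>j. j < n \<Longrightarrow> a j \<in> RatK) \<Longrightarrow> b \<in> RatK \<Longrightarrow>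
   (\<And>p. length p = n \<Longrightarrow> \<phi> p = (\<Sum>j<n. a j * p ! j) + b) \<Longrightarrow> rat_affine_form n \<phi>"
  unfolding rat_affine_form_def by blast

lemma rat_affine_formE:
  assumes "rat_affine_form n \<phi>"
  obtains a b where "\<And>j. j < n \<Longrightarrow> a j \<in> RatK" "b \<in> RatK"
    "\<And>p. length p = n \<Longrightarrow> \<phi> p = (\<Sum>j<n. a j * p ! j) + b"
  using assms unfolding rat_affine_form_def by metis

lemma rat_affine_form_cong:
  "rat_affine_form n \<phi> \<Longrightarrow> (\<And>p. length p = n \<Longrightarrow> \<phi> p = \<psi> p) \<Longrightarrow> rat_affine_form n \<psi>"
  unfolding rat_affine_form_def by metis

lemma rat_affine_form_const: "c \<in> RatK \<Longrightarrow> rat_affine_form n (\<lambda>_. c)"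
  by (rule rat_affine_formI[where a = "\<lambda>_. 0"]) (simp_all add: RatK_0)

lemma rat_affine_form_nth: "k < n \<Longrightarrow> rat_affine_form n (\<lambda>p. p ! k)"
proof (rule rat_affine_formI[where a = "\<lambda>j. if j = k then 1 else 0" and b = 0])
  fix p :: "'k::field kx list"
  assume "k < n"
  then show "p ! k = (\<Sum>j<n. (if j = k then 1 else 0) * p ! j) + 0"
    by (simp add: if_distrib[of "\<lambda>c. c * _"] cong: if_cong)
qed (simp_all add: RatK_0 RatK_1)

lemma rat_affine_form_add:
  assumes "rat_affine_form n \<phi>" and "rat_affine_form n \<psi>"
  shows "rat_affine_form n (\<lambda>p. \<phi> p + \<psi> p)"
proof -
  obtain a b where "\<And>j. j < n \<Longrightarrow> a j \<in> RatK" "b \<in> RatK"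
    "\<And>p. length p = n \<Longrightarrow> \<phi> p = (\<Sum>j<n. a j * p ! j) + b"
    using assms(1) by (rule rat_affine_formE) blast
  moreover obtain a' b' where "\<And>j. j < n \<Longrightarrow> a' j \<in> RatK" "b' \<in> RatK"
    "\<And>p. length p = n \<Longrightarrow> \<psi> p = (\<Sum>j<n. a' j * p ! j) + b'"
    using assms(2) by (rule rat_affine_formE) blast
  ultimately show ?thesis
    by (intro rat_affine_formI[where a = "\<lambda>j. a j + a' j" and b = "b + b'"])
       (simp_all add: RatK_add sum.distrib distrib_right)
qed

lemma rat_affine_form_scale:
  assumes "c \<in> RatK" and "rat_affine_form n \<phi>"
  shows "rat_affine_form n (\<lambda>p. c * \<phi> p)"
proof -
  obtain a b where "\<And>j. j < n \<Longrightarrow> a j \<in> RatK" "b \<in> RatK"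
    "\<And>p. length p = n \<Longrightarrow> \<phi> p = (\<Sum>j<n. a j * p ! j) + b"
    using assms(2) by (rule rat_affine_formE) blast
  with assms(1) show ?thesis
    by (intro rat_affine_formI[where a = "\<lambda>j. c * a j" and b = "c * b"])
       (simp_all add: RatK_mult sum_distrib_left distrib_left mult.assoc)
qed

lemma rat_affine_form_sum:
  "(\<And>j. j < (l::nat) \<Longrightarrow> rat_affine_form n (\<phi> j)) \<Longrightarrow> rat_affine_form n (\<lambda>p. \<Sum>j<l. \<phi> j p)"
  by (induction l) (simp_all add: rat_affine_form_const RatK_0 rat_affine_form_add)

lemma rational_affine_iff:
  "rational_affine n m f \<longleftrightarrow>
     (\<forall>p. length p = n \<longrightarrow> length (f p) = m) \<and> (\<forall>i<m. rat_affine_form n (\<lambda>p. f p ! i))"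
proof
  assume "rational_affine n m f"
  then obtain A b where "\<forall>i<m. \<forall>j<n. A i j \<in> RatK" "\<forall>i<m. b i \<in> RatK"
    "\<forall>p. length p = n \<longrightarrow> f p = map (\<lambda>i. (\<Sum>j<n. A i j * p ! j) + b i) [0..<m]"
    unfolding rational_affine_def by blast
  then show "(\<forall>p. length p = n \<longrightarrow> length (f p) = m) \<and> (\<forall>i<m. rat_affine_form n (\<lambda>p. f p ! i))"
    by (auto intro!: rat_affine_formI[where a = "A _"])
next
  assume f: "(\<forall>p. length p = n \<longrightarrow> length (f p) = m) \<and> (\<forall>i<m. rat_affine_form n (\<lambda>p. f p ! i))"
  then have "\<forall>i<m. \<exists>a b. (\<forall>j<n. a j \<in> RatK) \<and> b \<in> RatK \<and>
      (\<forall>p. length p = n \<longrightarrow> f p ! i = (\<Sum>j<n. a j * p ! j) + b)"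
    unfolding rat_affine_form_def by blast
  then obtain A b where "\<forall>i<m. (\<forall>j<n. A i j \<in> RatK) \<and> b i \<in> RatK \<and>
      (\<forall>p. length p = n \<longrightarrow> f p ! i = (\<Sum>j<n. A i j * p ! j) + b i)"
    by metis
  with f show "rational_affine n m f"
    unfolding rational_affine_def by (intro exI[of _ A] exI[of _ b]) (auto intro: nth_equalityI)
qed

lemma rational_affineI:
  "(\<And>p. length p = n \<Longrightarrow> length (f p) = m) \<Longrightarrow> (\<And>i. i < m \<Longrightarrow> rat_affine_form n (\<lambda>p. f p ! i))
   \<Longrightarrow> rational_affine n m f"
  by (simp add: rational_affine_iff)

lemma rational_affine_length: "rational_affine n m f \<Longrightarrow> length p = n \<Longrightarrow> length (f p) = m"
  and rational_affine_nth: "rational_affine n m f \<Longrightarrow> i < m \<Longrightarrow> rat_affine_form n (\<lambda>p. f p ! i)"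
  by (simp_all add: rational_affine_iff)

lemma rational_affine_cong:
  assumes "rational_affine n m f" and "\<And>p. length p = n \<Longrightarrow> f p = g p"
  shows "rational_affine n m g"
  using assms by (auto simp: rational_affine_iff intro: rat_affine_form_cong)

lemma rat_affine_form_comp:
  assumes "rat_affine_form l \<phi>" and "rational_affine n l h"
  shows "rat_affine_form n (\<lambda>p. \<phi> (h p))"
proof -
  obtain a b where ab: "\<And>j. j < l \<Longrightarrow> a j \<in> RatK" "b \<in> RatK"
    "\<And>q. length q = l \<Longrightarrow> \<phi> q = (\<Sum>j<l. a j * q ! j) + b"
    using assms(1) by (rule rat_affine_formE) blast
  have "rat_affine_form n (\<lambda>p. (\<Sum>j<l. a j * h p ! j) + b)"
    using ab assms(2)
    by (intro rat_affine_form_add rat_affine_form_sum rat_affine_form_scale rat_affine_form_const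
        rational_affine_nth)
  then show ?thesis
    by (rule rat_affine_form_cong) (simp add: ab(3) rational_affine_length[OF assms(2)])
qed

lemma rational_affine_comp:
  "rational_affine n l f \<Longrightarrow> rational_affine l m g \<Longrightarrow> rational_affine n m (g \<circ> f)"
  by (auto simp: rational_affine_iff intro: rat_affine_form_comp[where \<phi> = "\<lambda>q. g q ! _"])

lemma rational_affine_Nil: "rational_affine n 0 (\<lambda>_. [])"
  by (simp add: rational_affine_iff)

lemma rational_affine_Cons:
  "rat_affine_form n \<phi> \<Longrightarrow> rational_affine n m f \<Longrightarrow> rational_affine n (Suc m) (\<lambda>p. \<phi> p # f p)"
  by (auto simp: rational_affine_iff less_Suc_eq_0_disj)

lemma rational_affine_append:
  assumes f: "rational_affine n m1 f" and g: "rational_affine n m2 g"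
  shows "rational_affine n (m1 + m2) (\<lambda>p. f p @ g p)"
proof (rule rational_affineI)
  fix i assume "i < m1 + m2"
  then consider "i < m1" | "m1 \<le> i" "i - m1 < m2" by linarith
  then show "rat_affine_form n (\<lambda>p. (f p @ g p) ! i)"
  proof cases
    case 1
    then show ?thesis
      by (intro rat_affine_form_cong[OF rational_affine_nth[OF f 1]])
         (simp add: nth_append rational_affine_length[OF f])
  next
    case 2
    then show ?thesis
      by (intro rat_affine_form_cong[OF rational_affine_nth[OF g 2(2)]])
         (simp add: nth_append rational_affine_length[OF f])
  qed
qed (simp add: rational_affine_length[OF f] rational_affine_length[OF g])

lemma rational_affine_take: "k \<le> n \<Longrightarrow> rational_affine n k (take k)"
proof (rule rational_affineI)
  fix i assume "i < k" "k \<le> n"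
  then show "rat_affine_form n (\<lambda>p. take k p ! i)"
    by (intro rat_affine_form_cong[OF rat_affine_form_nth[of i]]) simp_all
qed simp

lemma rational_affine_drop: "rational_affine n (n - k) (drop k)"
proof (rule rational_affineI)
  fix i assume "i < n - k"
  then show "rat_affine_form n (\<lambda>p. drop k p ! i)"
    by (intro rat_affine_form_cong[OF rat_affine_form_nth[of "k + i"]]) simp_all
qed simp

lemma rational_affine_tensor:
  assumes "rational_affine n1 m1 f" and "rational_affine n2 m2 g"
  shows "rational_affine (n1 + n2) (m1 + m2) (\<lambda>p. f (take n1 p) @ g (drop n1 p))"
  using rational_affine_append[OF rational_affine_comp[OF rational_affine_take assms(1)]
      rational_affine_comp[OF rational_affine_drop[of "n1 + n2" n1, simplified] assms(2)]]
  by simp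

lemma rational_affine_id: "rational_affine n n (\<lambda>p. p)"
  by (rule rational_affine_cong[OF rational_affine_take[of n n]]) simp_all

lemma rational_affine_butlast: "rational_affine (Suc m) m butlast"
  by (rule rational_affine_cong[OF rational_affine_take[of m "Suc m"]])
     (simp_all add: butlast_conv_take)

lemma rat_affine_form_hd:
  assumes "0 < n"
  shows "rat_affine_form n hd"
  by (rule rat_affine_form_cong[OF rat_affine_form_nth[OF assms]])
     (use assms in \<open>auto simp: hd_conv_nth\<close>)

lemma rat_affine_form_hd_tl:
  assumes "1 < n"
  shows "rat_affine_form n (\<lambda>p. hd (tl p))"
  by (rule rat_affine_form_cong[OF rat_affine_form_nth[OF assms]])
     (use assms in \<open>auto simp: less_iff_Suc_add length_Suc_conv\<close>)

lemma rational_affine_gen_map: "rational_affine (fst (gsort g)) (snd (gsort g)) (gen_map g)"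
proof -
  have hd_X: "rat_affine_form n (\<lambda>p. hd p * X_kx)" if "0 < n" for n
    by (rule rat_affine_form_cong[OF rat_affine_form_scale[OF RatK_X rat_affine_form_hd[OF that]]])
       (simp add: mult.commute)
  show ?thesis
    by (cases g) (auto simp: numeral_2_eq_2 intro!: rational_affine_Cons rational_affine_Nil
        rat_affine_form_hd rat_affine_form_hd_tl hd_X rat_affine_form_add rat_affine_form_const
        RatK_0 RatK_1 rat_affine_form_scale[OF RatK_const])
qed

lemma rational_affine_swap: "rational_affine 2 2 (\<lambda>p. [hd (tl p), hd p])"
  by (auto simp: numeral_2_eq_2 intro!: rational_affine_Cons rational_affine_Nil
      rat_affine_form_hd rat_affine_form_hd_tl)

section \<open>Feedback\<close>

declare den.simps(7) [simp del]

lemma den_cup: "den cup = {([], [p, p]) | p. True}"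
  by (auto simp: cup_def)

lemma den_cap: "den cap = {([p, p], []) | p. True}"
  by (auto simp: cap_def)

lemma in_den_Tensor_idc:
  "(x, y) \<in> den (Tensor (idc n) d) \<longleftrightarrow>
     (\<exists>a x' y'. length a = n \<and> x = a @ x' \<and> y = a @ y' \<and> (x', y') \<in> den d)"
  by (auto simp: den.simps(7) den_idc)

lemma in_den_Tensor_Id1:
  "(x, y) \<in> den (Tensor d Id1) \<longleftrightarrow> (\<exists>x' y' q. x = x' @ [q] \<and> y = y' @ [q] \<and> (x', y') \<in> den d)"
  unfolding den.simps(7) by fastforce

lemma den_Tr:
  assumes "has_sort c (Suc n) (Suc m)"
  shows "den (Tr n m c) = {(a, b) | a b u. (a @ [u * X_kx], b @ [u]) \<in> den c}"
proof (intro set_eqI iffI)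
  fix x assume "x \<in> den (Tr n m c)"
  then obtain a b z w v where x: "x = (a, b)"
    and 1: "(a, z) \<in> den (Tensor (idc n) cup)" and 2: "(z, w) \<in> den (Tensor c Id1)"
    and 3: "(w, v) \<in> den (Tensor (idc m) (Tensor (Gen GReg) Id1))"
    and 4: "(v, b) \<in> den (Tensor (idc m) cap)"
    unfolding Tr_def by auto
  from 1 obtain p where z: "z = a @ [p, p]"
    by (auto simp: in_den_Tensor_idc den_cup)
  with 2 obtain y where y: "(a @ [p], y) \<in> den c" "w = y @ [p]"
    by (auto simp: in_den_Tensor_Id1)
  from den_lengths[OF assms y(1)] obtain b' u where "y = b' @ [u]" "length b' = m"
    by (metis length_Suc_conv_rev)
  with 3 y(2) have "v = b' @ [u * X_kx, p]"
    by (auto simp: in_den_Tensor_idc den.simps(7) den_Gen den_idc append_eq_append_conv)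
  with 4 have "b = b'" "p = u * X_kx"
    by (auto simp: in_den_Tensor_idc den_cap)
  then show "x \<in> {(a, b) | a b u. (a @ [u * X_kx], b @ [u]) \<in> den c}"
    using x y(1) \<open>y = b' @ [u]\<close> by auto
next
  fix x assume "x \<in> {(a, b) | a b u. (a @ [u * X_kx], b @ [u]) \<in> den c}"
  then obtain a b u where x: "x = (a, b)" and abu: "(a @ [u * X_kx], b @ [u]) \<in> den c" by blast
  have "length a = n" "length b = m" using den_lengths[OF assms abu] by auto
  then have "(a, a @ [u * X_kx, u * X_kx]) \<in> den (Tensor (idc n) cup)"
    and "(a @ [u * X_kx, u * X_kx], b @ [u, u * X_kx]) \<in> den (Tensor c Id1)"
    and "(b @ [u, u * X_kx], b @ [u * X_kx, u * X_kx])
           \<in> den (Tensor (idc m) (Tensor (Gen GReg) Id1))"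
    and "(b @ [u * X_kx, u * X_kx], b) \<in> den (Tensor (idc m) cap)"
    using abu by (auto simp: in_den_Tensor_idc in_den_Tensor_Id1 den_cup den_cap den_Gen)
  then show "x \<in> den (Tr n m c)"
    unfolding Tr_def x by auto
qed

lemma den_Tr_fun_graph:
  assumes c: "has_sort c (Suc n) (Suc m)" and f: "den c = fun_graph (Suc n) f"
    and U: "\<And>a u. length a = n \<Longrightarrow> last (f (a @ [u * X_kx])) = u \<longleftrightarrow> u = U a"
  shows "den (Tr n m c) = fun_graph n (\<lambda>a. butlast (f (a @ [U a * X_kx])))"
proof (rule fun_graph_eqI)
  fix a b
  have "(a, b) \<in> den (Tr n m c) \<longleftrightarrow> (\<exists>u. length a = n \<and> b @ [u] = f (a @ [u * X_kx]))"
    by (simp add: den_Tr[OF c] f)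
  also have "\<dots> \<longleftrightarrow> length a = n \<and> b = butlast (f (a @ [U a * X_kx]))"
  proof
    assume "\<exists>u. length a = n \<and> b @ [u] = f (a @ [u * X_kx])"
    then obtain u where "length a = n" "b @ [u] = f (a @ [u * X_kx])" by blast
    then show "length a = n \<and> b = butlast (f (a @ [U a * X_kx]))"
      using U[of a u] by (metis butlast_snoc last_snoc)
  next
    assume ab: "length a = n \<and> b = butlast (f (a @ [U a * X_kx]))"
    then have "f (a @ [U a * X_kx]) \<noteq> []"
      using fun_graph_length[OF c f, of "a @ [U a * X_kx]"] by auto
    then have "b @ [U a] = f (a @ [U a * X_kx])"
      using ab U[of a "U a"] by (metis append_butlast_last_id)
    then show "\<exists>u. length a = n \<and> b @ [u] = f (a @ [u * X_kx])" using ab by blast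
  qed
  finally show "(a, b) \<in> den (Tr n m c) \<longleftrightarrow> length a = n \<and> b = butlast (f (a @ [U a * X_kx]))" .
qed

lemma has_sort_cup: "has_sort cup 0 2" and has_sort_cap: "has_sort cap 2 0"
  unfolding cup_def cap_def by (auto intro!: has_sort.intros(6)[where l = 1] intro: has_sort.intros)

lemma has_sort_Tr:
  assumes "has_sort c (Suc n) (Suc m)"
  shows "has_sort (Tr n m c) n m"
proof -
  have "has_sort (Tensor (idc n) cup) n (Suc (Suc n))"
    and "has_sort (Tensor c Id1) (Suc (Suc n)) (Suc (Suc m))"
    and "has_sort (Tensor (idc m) (Tensor (Gen GReg) Id1)) (Suc (Suc m)) (Suc (Suc m))"
    and "has_sort (Tensor (idc m) cap) (Suc (Suc m)) m"
    by (auto intro!: has_sort_TensorI assms has_sort_idc has_sort_cup has_sort_cap has_sort.intros)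
  then show ?thesis
    unfolding Tr_def by (blast intro: has_sort.intros(6))
qed

section \<open>Signal flow graphs denote rational affine maps\<close>

lemma rational_affine_feedback:
  assumes f: "rational_affine (Suc n) (Suc m) f"
  obtains U where "\<And>a u. length a = n \<Longrightarrow> last (f (a @ [u * X_kx])) = u \<longleftrightarrow> u = U a"
    and "rational_affine n m (\<lambda>a. butlast (f (a @ [U a * X_kx])))"
proof -
  obtain \<alpha> \<beta> where \<alpha>: "\<And>j. j < Suc n \<Longrightarrow> \<alpha> j \<in> RatK" "\<beta> \<in> RatK"
    and f_m: "\<And>p. length p = Suc n \<Longrightarrow> f p ! m = (\<Sum>j<Suc n. \<alpha> j * p ! j) + \<beta>"
    using rational_affine_nth[OF f lessI] by (rule rat_affine_formE) blast
  define S where "S a = (\<Sum>j<n. \<alpha> j * a ! j) + \<beta>" for a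
  define U where "U a = inverse (1 - \<alpha> n * X_kx) * S a" for a
  have "1 - \<alpha> n * X_kx \<noteq> 0" and inv: "inverse (1 - \<alpha> n * X_kx) \<in> RatK"
    using RatK_one_minus_X \<alpha>(1) by auto
  have fixpoint: "last (f (a @ [u * X_kx])) = u \<longleftrightarrow> u = U a" if "length a = n" for a u
  proof -
    have "last (f (a @ [u * X_kx])) = f (a @ [u * X_kx]) ! m"
      using rational_affine_length[OF f, of "a @ [u * X_kx]"] that
      by (cases "f (a @ [u * X_kx])" rule: rev_cases) auto
    also have "\<dots> = S a + \<alpha> n * (u * X_kx)"
      using that by (simp add: f_m S_def nth_append ac_simps)
    finally have "last (f (a @ [u * X_kx])) = u \<longleftrightarrow> (1 - \<alpha> n * X_kx) * u = S a"
      by (auto simp: algebra_simps)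
    also have "\<dots> \<longleftrightarrow> u = U a"
      using \<open>1 - \<alpha> n * X_kx \<noteq> 0\<close> by (auto simp: U_def field_simps)
    finally show ?thesis .
  qed
  have "rat_affine_form n S"
    unfolding S_def by (rule rat_affine_formI[of n \<alpha>]) (use \<alpha> in simp_all)
  then have "rat_affine_form n (\<lambda>a. X_kx * (inverse (1 - \<alpha> n * X_kx) * S a))"
    by (intro rat_affine_form_scale RatK_X inv)
  then have "rat_affine_form n (\<lambda>a. U a * X_kx)"
    by (rule rat_affine_form_cong) (simp add: U_def mult.commute)
  then have "rational_affine n (Suc n) (\<lambda>a. a @ [U a * X_kx])"
    using rational_affine_append[OF rational_affine_id
        rational_affine_Cons[OF _ rational_affine_Nil]] by simp
  then have "rational_affine n m (butlast \<circ> (f \<circ> (\<lambda>a. a @ [U a * X_kx])))"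
    by (rule rational_affine_comp[OF rational_affine_comp[OF _ f] rational_affine_butlast])
  with fixpoint show thesis
    using that by (simp add: comp_def)
qed

lemma den_Tr_rational_affine:
  assumes "has_sort c (Suc n) (Suc m)"
    and "rational_affine (Suc n) (Suc m) f" and "den c = fun_graph (Suc n) f"
  obtains F where "rational_affine n m F" and "den (Tr n m c) = fun_graph n F"
proof -
  obtain U where "\<And>a u. length a = n \<Longrightarrow> last (f (a @ [u * X_kx])) = u \<longleftrightarrow> u = U a"
    and "rational_affine n m (\<lambda>a. butlast (f (a @ [U a * X_kx])))"
    using rational_affine_feedback[OF assms(2)] by blast
  with den_Tr_fun_graph[OF assms(1,3)] show thesis
    using that by blast
qed

theorem sfg_den_rational_affine:
  "sfg g \<Longrightarrow> has_sort g n m \<Longrightarrow> \<exists>f. rational_affine n m f \<and> den g = fun_graph n f"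
proof (induction arbitrary: n m rule: sfg.induct)
  case (1 g)
  then have "gsort g = (n, m)" by (rule has_sort_GenE)
  then show ?case
    using den_Gen[of g] rational_affine_gen_map[of g] by auto
next
  case 2
  then have "n = 0" "m = 0" by (auto elim: has_sort_Id0E)
  then show ?case
    using den_Id0 rational_affine_Nil by auto
next
  case 3
  then have "n = 1" "m = 1" by (auto elim: has_sort_Id1E)
  then show ?case
    using den_Id1 rational_affine_id by auto
next
  case 4
  then have "n = 2" "m = 2" by (auto elim: has_sort_SwE)
  then show ?case
    using den_Sw rational_affine_swap by auto
next
  case (5 c d n l m n' m')
  from 5(7) obtain l' where "has_sort c n' l'" "has_sort d l' m'" by (rule has_sort_SeqE)
  with "5.IH" obtain f g where f: "rational_affine n' l' f" "den c = fun_graph n' f"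
    and g: "rational_affine l' m' g" "den d = fun_graph l' g"
    by blast
  then have "den (Seq c d) = fun_graph n' (g \<circ> f)"
    by (simp add: relcomp_fun_graph rational_affine_length)
  with f g show ?case
    using rational_affine_comp by blast
next
  case (6 c d n m)
  from 6(5) obtain n1 m1 n2 m2
    where "n = n1 + n2" "m = m1 + m2" "has_sort c n1 m1" "has_sort d n2 m2"
    by (rule has_sort_TensorE)
  with "6.IH" obtain f g where "rational_affine n1 m1 f" "den c = fun_graph n1 f"
    "rational_affine n2 m2 g" "den d = fun_graph n2 g"
    by blast
  with \<open>n = n1 + n2\<close> \<open>m = m1 + m2\<close> show ?case
    using den_Tensor_fun_graph rational_affine_tensor by blast
next
  case (7 c n m n' m')
  have "n' = n" "m' = m"
    using has_sort_unique[OF has_sort_Tr[OF 7(2)] 7(4)] by simp_all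
  moreover obtain f where "rational_affine (Suc n) (Suc m) f" "den c = fun_graph (Suc n) f"
    using "7.IH"[OF 7(2)] by blast
  ultimately show ?case
    using den_Tr_rational_affine[OF 7(2)] by metis
qed

section \<open>Rational affine maps are realised by signal flow graphs\<close>

definition sfg_realisable :: "nat \<Rightarrow> nat \<Rightarrow> ('k::field kx list \<Rightarrow> 'k kx list) \<Rightarrow> bool" where
  "sfg_realisable n m f \<longleftrightarrow> (\<exists>g. sfg g \<and> has_sort g n m \<and> den g = fun_graph n f)"

lemma sfg_realisable_cong:
  "sfg_realisable n m f \<Longrightarrow> (\<And>p. length p = n \<Longrightarrow> f p = g p) \<Longrightarrow> sfg_realisable n m g"
  unfolding sfg_realisable_def by (metis fun_graph_cong)

lemma sfg_realisable_comp:
  assumes "sfg_realisable n l f" and "sfg_realisable l m g"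
  shows "sfg_realisable n m (g \<circ> f)"
proof -
  obtain c d where c: "sfg c" "has_sort c n l" "den c = fun_graph n f"
    and d: "sfg d" "has_sort d l m" "den d = fun_graph l g"
    using assms unfolding sfg_realisable_def by blast
  have "den (Seq c d) = fun_graph n (g \<circ> f)"
    using relcomp_fun_graph[OF fun_graph_length[OF c(2,3)]] c(3) d(3) by simp
  then show ?thesis
    unfolding sfg_realisable_def
    using sfg.intros(5)[OF c(1) d(1) c(2) d(2)] has_sort.intros(6)[OF c(2) d(2)] by blast
qed

lemma sfg_realisable_tensor:
  assumes "sfg_realisable n1 m1 f" and "sfg_realisable n2 m2 g" and "n = n1 + n2" and "m = m1 + m2"
  shows "sfg_realisable n m (\<lambda>p. f (take n1 p) @ g (drop n1 p))"
proof -
  obtain c d where c: "sfg c" "has_sort c n1 m1" "den c = fun_graph n1 f"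
    and d: "sfg d" "has_sort d n2 m2" "den d = fun_graph n2 g"
    using assms unfolding sfg_realisable_def by blast
  then show ?thesis
    unfolding sfg_realisable_def assms(3,4)
    by (intro exI[of _ "Tensor c d"] conjI sfg.intros(6) has_sort.intros(7) den_Tensor_fun_graph)
qed

lemma sfg_realisable_gen_map: "sfg_realisable (fst (gsort g)) (snd (gsort g)) (gen_map g)"
  unfolding sfg_realisable_def
  using sfg.intros(1) has_sort.intros(1)[of g, OF prod.collapse[symmetric]] den_Gen by blast

lemma sfg_realisable_id: "sfg_realisable n n (\<lambda>p. p)"
  unfolding sfg_realisable_def using sfg_idc has_sort_idc den_idc by blast

lemma sfg_realisable_swap: "sfg_realisable 2 2 (\<lambda>p. [hd (tl p), hd p])"
  unfolding sfg_realisable_def using den_Sw by (blast intro: sfg.intros(4) has_sort.intros(5))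

lemma sfg_realisable_feedback:
  assumes "sfg_realisable (Suc n) (Suc m) f"
    and "\<And>a u. length a = n \<Longrightarrow> last (f (a @ [u * X_kx])) = u \<longleftrightarrow> u = U a"
  shows "sfg_realisable n m (\<lambda>a. butlast (f (a @ [U a * X_kx])))"
proof -
  obtain c where c: "sfg c" "has_sort c (Suc n) (Suc m)" "den c = fun_graph (Suc n) f"
    using assms(1) unfolding sfg_realisable_def by blast
  then show ?thesis
    unfolding sfg_realisable_def
    by (intro exI[of _ "Tr n m c"] conjI sfg.intros(7) has_sort_Tr den_Tr_fun_graph assms(2))
qed

lemma sfg_realisable_copier: "sfg_realisable 1 2 (\<lambda>p :: 'k::field kx list. [hd p, hd p])"
  and sfg_realisable_discarder: "sfg_realisable 1 0 (\<lambda>p :: 'k::field kx list. [])"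
  and sfg_realisable_amplifier: "sfg_realisable 1 1 (\<lambda>p :: 'k::field kx list. [const_kx r * hd p])"
  and sfg_realisable_register: "sfg_realisable 1 1 (\<lambda>p :: 'k::field kx list. [hd p * X_kx])"
  and sfg_realisable_adder: "sfg_realisable 2 1 (\<lambda>p :: 'k::field kx list. [hd p + hd (tl p)])"
  and sfg_realisable_zero: "sfg_realisable 0 1 (\<lambda>p :: 'k::field kx list. [0])"
  and sfg_realisable_one: "sfg_realisable 0 1 (\<lambda>p :: 'k::field kx list. [1])"
  using sfg_realisable_gen_map[of "GCopy :: 'k gen"] sfg_realisable_gen_map[of "GDisc :: 'k gen"]
    sfg_realisable_gen_map[of "GAmp r"] sfg_realisable_gen_map[of "GReg :: 'k gen"]
    sfg_realisable_gen_map[of "GAdd :: 'k gen"] sfg_realisable_gen_map[of "GZero :: 'k gen"]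
    sfg_realisable_gen_map[of "GOne :: 'k gen"]
  by simp_all

lemma sfg_realisable_discard_all: "sfg_realisable n 0 (\<lambda>p :: 'k::field kx list. [])"
proof (induction n)
  case 0
  show ?case
    unfolding sfg_realisable_def using sfg.intros(2) has_sort.intros(3) den_Id0 by blast
next
  case (Suc n)
  show ?case
    by (rule sfg_realisable_cong[OF sfg_realisable_tensor[OF sfg_realisable_discarder Suc]])
       simp_all
qed

lemma sfg_realisable_rotate1: "sfg_realisable (Suc n) (Suc n) (rotate1 :: 'k::field kx list \<Rightarrow> _)"
proof (induction n)
  case 0
  show ?case
    by (rule sfg_realisable_cong[OF sfg_realisable_id]) (auto simp: length_Suc_conv)
next
  case (Suc n)
  have swap: "sfg_realisable (Suc (Suc n)) (Suc (Suc n))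
      (\<lambda>p :: 'k kx list. [hd (tl (take 2 p)), hd (take 2 p)] @ drop 2 p)"
    by (rule sfg_realisable_tensor[OF sfg_realisable_swap sfg_realisable_id]) simp_all
  have rotate: "sfg_realisable (Suc (Suc n)) (Suc (Suc n))
      (\<lambda>p :: 'k kx list. take 1 p @ rotate1 (drop 1 p))"
    by (rule sfg_realisable_tensor[OF sfg_realisable_id Suc]) simp_all
  show ?case
    by (rule sfg_realisable_cong[OF sfg_realisable_comp[OF swap rotate]])
       (auto simp: length_Suc_conv numeral_2_eq_2)
qed

lemma sfg_realisable_duplicate: "sfg_realisable n (n + n) (\<lambda>p :: 'k::field kx list. p @ p)"
proof (induction n)
  case 0
  show ?case
    using sfg_realisable_cong[OF sfg_realisable_discard_all[of 0], of "\<lambda>p. p @ p"] by simp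
next
  case (Suc n)
  have copy: "sfg_realisable (Suc n) (Suc (Suc (n + n)))
      (\<lambda>p :: 'k kx list. [hd (take 1 p), hd (take 1 p)] @ drop 1 p @ drop 1 p)"
    by (rule sfg_realisable_tensor[OF sfg_realisable_copier Suc]) simp_all
  have rotate: "sfg_realisable (Suc (Suc (n + n))) (Suc n + Suc n)
      (\<lambda>q :: 'k kx list. take 1 q @ rotate1 (take (Suc n) (drop 1 q)) @ drop (Suc n) (drop 1 q))"
    by (rule sfg_realisable_tensor[OF sfg_realisable_id
          sfg_realisable_tensor[OF sfg_realisable_rotate1 sfg_realisable_id]]) simp_all
  show ?case
    by (rule sfg_realisable_cong[OF sfg_realisable_comp[OF copy rotate]])
       (auto simp: length_Suc_conv)
qed

lemma sfg_realisable_poly_amplifier: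
  "sfg_realisable 1 1 (\<lambda>x :: 'k::field kx list. [Fract p 1 * hd x])"
proof (induction p)
  case 0
  show ?case
    by (rule sfg_realisable_cong[OF
          sfg_realisable_comp[OF sfg_realisable_discarder sfg_realisable_zero]])
       (simp add: Zero_fract_def)
next
  case (pCons a p)
  have branches: "sfg_realisable 2 2
      (\<lambda>x :: 'k kx list. [const_kx a * hd x, Fract p 1 * hd (tl x) * X_kx])"
    by (rule sfg_realisable_cong[OF sfg_realisable_tensor[OF sfg_realisable_amplifier
          sfg_realisable_comp[OF pCons.IH sfg_realisable_register]]])
       (auto simp: length_Suc_conv numeral_2_eq_2)
  show ?case
    by (rule sfg_realisable_cong[OF sfg_realisable_comp[OF
          sfg_realisable_comp[OF sfg_realisable_copier branches] sfg_realisable_adder]])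
       (simp add: Fract_pCons algebra_simps)
qed

lemma sfg_realisable_rat_amplifier:
  assumes "r \<in> RatK"
  shows "sfg_realisable 1 1 (\<lambda>x :: 'k::field kx list. [r * hd x])"
proof -
  obtain p q where nz: "1 + Fract q 1 * X_kx \<noteq> 0"
    and r: "r * (1 + Fract q 1 * X_kx) = Fract p 1"
    using assms by (rule RatK_denominator_one_plus_X)
  \<comment> \<open>The feedback fixpoint of the loop body y, u = p x - q X u, is u = r x.\<close>
  define y where "y x = Fract p 1 * hd x - Fract q 1 * hd (tl x)" for x :: "'k kx list"
  have branches: "sfg_realisable 2 2
      (\<lambda>x :: 'k kx list. [Fract p 1 * hd x, - (Fract q 1 * hd (tl x))])"
    by (rule sfg_realisable_cong[OF sfg_realisable_tensor[OF
          sfg_realisable_poly_amplifier sfg_realisable_poly_amplifier[of "- q"]]])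
       (auto simp: length_Suc_conv numeral_2_eq_2 simp flip: minus_fract)
  have loop: "sfg_realisable 2 2 (\<lambda>x. [y x, y x])"
    by (rule sfg_realisable_cong[OF sfg_realisable_comp[OF
          sfg_realisable_comp[OF branches sfg_realisable_adder] sfg_realisable_copier]])
       (simp_all add: y_def)
  have fixpoint: "last [y (a @ [u * X_kx]), y (a @ [u * X_kx])] = u \<longleftrightarrow> u = r * hd a"
    if "length a = 1" for a u
  proof -
    have "last [y (a @ [u * X_kx]), y (a @ [u * X_kx])] = u \<longleftrightarrow>
        u * (1 + Fract q 1 * X_kx) = Fract p 1 * hd a"
      using that by (auto simp: y_def length_Suc_conv algebra_simps eq_diff_eq diff_eq_eq)
    also have "\<dots> \<longleftrightarrow> u = r * hd a"
      using nz by (simp flip: r add: mult.commute mult.left_commute)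
    finally show ?thesis .
  qed
  have "sfg_realisable 1 1 (\<lambda>a. butlast [y (a @ [r * hd a * X_kx]), y (a @ [r * hd a * X_kx])])"
    using sfg_realisable_feedback[of 1 1 "\<lambda>x. [y x, y x]" "\<lambda>a. r * hd a"] loop fixpoint
    by (simp add: numeral_2_eq_2)
  then show ?thesis
    by (rule sfg_realisable_cong) (use fixpoint in auto)
qed

lemma sfg_realisable_rat_affine_form:
  "rat_affine_form n \<phi> \<Longrightarrow> sfg_realisable n 1 (\<lambda>p. [\<phi> p])"
proof (induction n arbitrary: \<phi>)
  case 0
  then obtain b where b: "b \<in> RatK" "\<phi> [] = b"
    by (auto elim!: rat_affine_formE)
  show ?case
    by (rule sfg_realisable_cong[OF sfg_realisable_comp[OF sfg_realisable_one
          sfg_realisable_rat_amplifier[OF b(1)]]]) (simp add: b(2))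
next
  case (Suc n)
  obtain a b where a: "\<And>j. j < Suc n \<Longrightarrow> a j \<in> RatK" and "b \<in> RatK"
    and \<phi>: "\<And>p. length p = Suc n \<Longrightarrow> \<phi> p = (\<Sum>j<Suc n. a j * p ! j) + b"
    using Suc.prems by (rule rat_affine_formE) blast
  define \<psi> where "\<psi> q = (\<Sum>j<n. a (Suc j) * q ! j) + b" for q
  have "rat_affine_form n \<psi>"
    unfolding \<psi>_def by (rule rat_affine_formI) (use a \<open>b \<in> RatK\<close> in simp_all)
  then have branches: "sfg_realisable (Suc n) 2 (\<lambda>p. [a 0 * hd p, \<psi> (tl p)])"
    by (rule sfg_realisable_cong[OF sfg_realisable_tensor[OF
          sfg_realisable_rat_amplifier[OF a[OF zero_less_Suc]] Suc.IH]])
       (auto simp: length_Suc_conv)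
  have \<phi>_Cons: "\<phi> (x # q) = a 0 * x + \<psi> q" if "length q = n" for x q
    using that by (simp add: \<phi> \<psi>_def sum.lessThan_Suc_shift add.assoc del: sum.lessThan_Suc)
  show ?case
    by (rule sfg_realisable_cong[OF sfg_realisable_comp[OF branches sfg_realisable_adder]])
       (auto simp: length_Suc_conv \<phi>_Cons)
qed

lemma sfg_realisable_rational_affine: "rational_affine n m f \<Longrightarrow> sfg_realisable n m f"
proof (induction m arbitrary: f)
  case 0
  show ?case
    by (rule sfg_realisable_cong[OF sfg_realisable_discard_all])
       (metis 0 length_0_conv rational_affine_length)
next
  case (Suc m)
  have head: "sfg_realisable n 1 (\<lambda>p. [f p ! 0])"
    by (rule sfg_realisable_rat_affine_form[OF rational_affine_nth[OF Suc.prems zero_less_Suc]])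
  have "rational_affine n m (\<lambda>p. tl (f p))"
  proof (rule rational_affineI)
    fix i assume "i < m"
    show "rat_affine_form n (\<lambda>p. tl (f p) ! i)"
      by (rule rat_affine_form_cong[OF rational_affine_nth[OF Suc.prems, of "Suc i"]])
         (simp_all add: \<open>i < m\<close> nth_tl rational_affine_length[OF Suc.prems])
  qed (simp add: rational_affine_length[OF Suc.prems])
  then have tail: "sfg_realisable n m (\<lambda>p. tl (f p))"
    by (rule Suc.IH)
  have split: "sfg_realisable (n + n) (Suc m) (\<lambda>q. [f (take n q) ! 0] @ tl (f (drop n q)))"
    by (rule sfg_realisable_tensor[OF head tail]) simp_all
  have f_split: "f p ! 0 # tl (f p) = f p" if "length p = n" for p
    using rational_affine_length[OF Suc.prems that] by (cases "f p") auto
  show ?case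
    by (rule sfg_realisable_cong[OF sfg_realisable_comp[OF sfg_realisable_duplicate split]])
       (simp add: f_split)
qed

theorem proposition11:
  fixes c :: "'k::field circ" and n m :: nat
  assumes "has_sort c n m"
  shows "(\<exists>f. rational_affine n m f \<and> den c = {(p, f p) | p. length p = n})
     \<longleftrightarrow> (\<exists>g. sfg g \<and> has_sort g n m \<and> den g = den c)"
proof
  assume "\<exists>f. rational_affine n m f \<and> den c = {(p, f p) | p. length p = n}"
  then obtain f where "rational_affine n m f" and "den c = fun_graph n f"
    by (auto simp: fun_graph_def)
  then show "\<exists>g. sfg g \<and> has_sort g n m \<and> den g = den c"
    using sfg_realisable_rational_affine unfolding sfg_realisable_def by auto
next
  assume "\<exists>g. sfg g \<and> has_sort g n m \<and> den g = den c"
  then obtain g where "sfg g" and "has_sort g n m" and "den g = den c"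
    by blast
  then show "\<exists>f. rational_affine n m f \<and> den c = {(p, f p) | p. length p = n}"
    using sfg_den_rational_affine by (fastforce simp: fun_graph_def)
qed

end
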